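(* Let $n\ge1$. A signed permutation $\pi\in\mathfrak B_n$ is a type B André permutation if and only if every inner node of the tree $T_\pi\in\mathcal{BHR}_n$ is a min-node.
   Context: $\mathfrak B_n$ is the set of signed permutations $\pi=\pi_1\cdots\pi_n$ (words over $\{\pm1,\dots,\pm n\}$ with $|\pi_1|,\dots,|\pi_n|$ a permutation of $[n]$), compared as integers; always set $\pi_0=0$. Trees are rooted binary trees with each child designated left or right. A min–max tree on a totally ordered label set is labeled bijectively so that each node's label is the minimum or maximum of its subtree's labels. A node with a child is inner; an inner node is a min-node (resp. max-node) if its label is the minimum (resp. maximum) of its subtree. An HR-tree is a min–max tree in which every inner node $s$ has a nonempty right subtree containing the maximum label of the subtree of $s$ if $s$ is a min-node, the minimum if $s$ is a max-node. The reading word is the in-order reading $w(T)=w(L)\,\ell_{\mathrm{root}}\,w(R)$. $\mathcal{BHR}_n$ is the set of HR-trees whose label set is $\{0,s_1,\dots,s_n\}$ with $s_i\in\{i,-i\}$, such that $0$ is the first letter of $w(T)$; $T\mapsto w(T)=0\pi_1\cdots\pi_n$ is a bijection $\mathcal{BHR}_n\to\mathfrak B_n$, and $T_\pi$ denotes the tree with $w(T_\pi)=0\pi_1\cdots\pi_n$. For the word $0\pi_1\cdots\pi_n$ and an index $i\in[n]$, the $\pi_i$-factorization is $0\pi_1\cdots\pi_n=w_1w_2\pi_iw_4w_5$ where $w_2$ is the longest factor ending just before $\pi_i$ all of whose letters exceed $\pi_i$ and $w_4$ is the longest factor starting just after $\pi_i$ all of whose letters exceed $\pi_i$. $\pi\in\mathfrak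 B_n$ is a type B André permutation if (i) there is no $i\in\{1,\dots,n-1\}$ with $\pi_{i-1}>\pi_i>\pi_{i+1}$, (ii) $\pi_{n-1}<\pi_n$ (with $\pi_0=0$), and (iii) for every valley $i\in\{1,\dots,n-1\}$ (i.e. $\pi_{i-1}>\pi_i<\pi_{i+1}$), the maximum letter of $w_2$ is smaller than the maximum letter of $w_4$ in the $\pi_i$-factorization. (E.g. for $n=2$ these are $12$, $\bar12$, $\bar21$, where $\bar k=-k$.) *)

theory Defs
  imports Main "HOL-Library.Tree"
begin

definition is_inner :: "int tree \<Rightarrow> bool" where
  "is_inner t \<longleftrightarrow> (case t of Leaf \<Rightarrow> False | Node l a r \<Rightarrow> l \<noteq> Leaf \<or> r \<noteq> Leaf)"

definition is_min_node :: "int tree \<Rightarrow> bool" where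
  "is_min_node t \<longleftrightarrow> is_inner t \<and> (case t of Leaf \<Rightarrow> False | Node l a r \<Rightarrow> a = Min (set_tree t))"

definition is_max_node :: "int tree \<Rightarrow> bool" where
  "is_max_node t \<longleftrightarrow> is_inner t \<and> (case t of Leaf \<Rightarrow> False | Node l a r \<Rightarrow> a = Max (set_tree t))"

definition min_max_tree :: "int tree \<Rightarrow> bool" where
  "min_max_tree T \<longleftrightarrow> distinct (inorder T) \<and>
     (\<forall>l a r. Node l a r \<in> subtrees T \<longrightarrow>
        a = Min (set_tree (Node l a r)) \<or> a = Max (set_tree (Node l a r)))"

definition HR_tree :: "int tree \<Rightarrow> bool" where
  "HR_tree T \<longleftrightarrow> min_max_tree T \<and>
     (\<forall>l a r. Node l a r \<in> subtrees T \<and> is_inner (Node l a r) \<longrightarrow>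
        r \<noteq> Leaf \<and>
        (is_min_node (Node l a r) \<longrightarrow> Max (set_tree (Node l a r)) \<in> set_tree r) \<and>
        (is_max_node (Node l a r) \<longrightarrow> Min (set_tree (Node l a r)) \<in> set_tree r))"

definition BHR :: "nat \<Rightarrow> int tree set" where
  "BHR n = {T. HR_tree T \<and>
     (\<exists>s::nat \<Rightarrow> int. (\<forall>i\<in>{1..n}. s i = int i \<or> s i = - int i) \<and>
         set_tree T = insert 0 (s ` {1..n})) \<and>
     inorder T \<noteq> [] \<and> hd (inorder T) = 0}"

definition signed_perms :: "nat \<Rightarrow> int list set" where
  "signed_perms n = {\<pi>. length \<pi> = n \<and> abs ` set \<pi> = int ` {1..n}}"

definition T_of :: "nat \<Rightarrow> int list \<Rightarrow> int tree" where
  "T_of n \<pi> = (THE T. T \<in> BHR n \<and> inorder T = 0 # \<pi>)"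

(* the letters of the factor w_2 (resp. w_4) in the pi_i-factorization of p = 0 pi_1...pi_n *)
definition w2_set :: "int list \<Rightarrow> nat \<Rightarrow> int set" where
  "w2_set p i = {p ! j | j. j < i \<and> (\<forall>k\<in>{j..<i}. p ! k > p ! i)}"

definition w4_set :: "int list \<Rightarrow> nat \<Rightarrow> int set" where
  "w4_set p i = {p ! j | j. i < j \<and> j < length p \<and> (\<forall>k\<in>{i<..j}. p ! k > p ! i)}"

(* type B Andre permutation; p ! i = pi_i with pi_0 = 0 *)
definition andre_B :: "nat \<Rightarrow> int list \<Rightarrow> bool" where
  "andre_B n \<pi> \<longleftrightarrow> (let p = 0 # \<pi> in
     (\<not> (\<exists>i\<in>{1..n-1}. p ! (i-1) > p ! i \<and> p ! i > p ! (i+1))) \<and>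
     p ! (n-1) < p ! n \<and>
     (\<forall>i\<in>{1..n-1}. p ! (i-1) > p ! i \<and> p ! i < p ! (i+1) \<longrightarrow>
        Max (w2_set p i) < Max (w4_set p i)))"

end

theory Submission
  imports Defs
begin

text \<open>
  An HR-tree is determined by its reading word: its root label is whichever of the minimum and the
  maximum of the word comes first, and the factors to the left and right of it are the reading words
  of the two subtrees. Hence all inner nodes are min-nodes iff, recursively in every factor, the
  minimum precedes the maximum.

  Conditions (i)--(iii) of an Andre permutation together say: every letter \<open>x\<close> with a nonempty
  factor \<open>w\<^sub>2\<close> also has a nonempty factor \<open>w\<^sub>4\<close>, and \<open>max w\<^sub>2 < max w\<^sub>4\<close>. In a word \<open>u m v\<close>
  with minimum \<open>m\<close> these factors never extend across \<open>m\<close>, so the condition for \<open>u m v\<close> splits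
  into the conditions for \<open>u\<close>, for \<open>v\<close>, and the one at \<open>m\<close>, which reads \<open>u = [] \<or> max u < max v\<close>.
  It holds when the maximum of the word lies in \<open>v\<close>; when the maximum precedes the minimum
  instead, the condition fails at the minimum.
\<close>

lemma less_length_takeWhile_iff:
  "j < length (takeWhile P xs) \<longleftrightarrow> j < length xs \<and> (\<forall>k\<le>j. P (xs ! k))"
proof
  assume j: "j < length (takeWhile P xs)"
  have "P (xs ! k)" if "k \<le> j" for k
    using j that set_takeWhileD[OF nth_mem, of k P xs] takeWhile_nth[of k P xs] by simp
  then show "j < length xs \<and> (\<forall>k\<le>j. P (xs ! k))"
    using j length_takeWhile_le order.strict_trans2 by blast
next
  assume "j < length xs \<and> (\<forall>k\<le>j. P (xs ! k))"
  then show "j < length (takeWhile P xs)"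
    using length_takeWhile_less_P_nth[of "Suc j" P xs] by auto
qed

lemma set_takeWhile_conv_nth:
  "set (takeWhile P xs) = {xs ! j | j. j < length xs \<and> (\<forall>k\<le>j. P (xs ! k))}"
  unfolding set_conv_nth[of "takeWhile P xs"] less_length_takeWhile_iff[symmetric]
  by (metis takeWhile_nth)

lemma distinct_split_unique:
  "distinct (xs @ x # ys) \<Longrightarrow> xs @ x # ys = xs' @ x # ys' \<Longrightarrow> xs = xs' \<and> ys = ys'"
  by (metis append_Cons_eq_iff distinct.simps(2) distinct_append not_distinct_conv_prefix)

lemma distinct_precedes_asym:
  assumes "distinct (xs @ x # ys)" "y \<in> set ys" "xs @ x # ys = xs' @ y # ys'"
  shows "x \<notin> set ys'"
proof -
  obtain ys1 ys2 where ys: "ys = ys1 @ y # ys2" using assms(2) by (meson split_list)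
  then have "ys' = ys2"
    using distinct_split_unique[of "xs @ x # ys1" y ys2] assms(1,3) by simp
  then show ?thesis using assms(1) ys by auto
qed

lemma split_list_either_order:
  assumes "x \<in> set w" "y \<in> set w" "x \<noteq> y"
  obtains u v where "w = u @ x # v" "y \<in> set v" | u v where "w = u @ y # v" "x \<in> set v"
proof -
  obtain a b where w: "w = a @ x # b" using assms(1) by (meson split_list)
  show ?thesis
  proof (cases "y \<in> set b")
    case False
    then obtain a1 a2 where "a = a1 @ y # a2" using assms w by (auto dest: split_list)
    then show ?thesis using w that(2)[of a1 "a2 @ x # b"] by simp
  qed (use w that(1) in blast)
qed

lemma all_less_Suc_add_iff:
  "(\<forall>i<Suc (a + b). P i) \<longleftrightarrow> (\<forall>i<a. P i) \<and> P a \<and> (\<forall>i<b. P (Suc (a + i)))"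
proof
  assume "(\<forall>i<a. P i) \<and> P a \<and> (\<forall>i<b. P (Suc (a + i)))"
  moreover have "i < a \<or> i = a \<or> (i = Suc (a + (i - Suc a)) \<and> i - Suc a < b)"
    if "i < Suc (a + b)" for i
    using that by linarith
  ultimately show "\<forall>i<Suc (a + b). P i" by metis
qed auto

section \<open>The Andre condition on words\<close>

text \<open>
  For the word \<open>xs @ x # ys\<close>, \<open>w2\<close> is the factor \<open>w\<^sub>2\<close> of the \<open>x\<close>-factorization read backwards
  and \<open>w4\<close> is \<open>w\<^sub>4\<close>.
\<close>
definition andre_letter :: "'a::linorder list \<Rightarrow> 'a \<Rightarrow> 'a list \<Rightarrow> bool" where
  "andre_letter xs x ys \<longleftrightarrow>
    (let w2 = takeWhile (\<lambda>y. x < y) (rev xs); w4 = takeWhile (\<lambda>y. x < y) ys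
     in w2 \<noteq> [] \<longrightarrow> w4 \<noteq> [] \<and> Max (set w2) < Max (set w4))"

definition andre_word :: "'a::linorder list \<Rightarrow> bool" where
  "andre_word p \<longleftrightarrow> (\<forall>i<length p. andre_letter (take i p) (p ! i) (drop (Suc i) p))"

lemma andre_letter_append_right:
  "y < x \<Longrightarrow> andre_letter xs x (ys @ y # zs) = andre_letter xs x ys"
  by (simp add: andre_letter_def takeWhile_tail)

lemma andre_letter_append_left:
  "y < x \<Longrightarrow> andre_letter (zs @ y # xs) x ys = andre_letter xs x ys"
  by (simp add: andre_letter_def takeWhile_tail)

lemma andre_letter_min:
  assumes "\<forall>z\<in>set xs \<union> set ys. x < z"
  shows "andre_letter xs x ys \<longleftrightarrow> (xs \<noteq> [] \<longrightarrow> ys \<noteq> [] \<and> Max (set xs) < Max (set ys))"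
proof -
  have runs: "takeWhile (\<lambda>y. x < y) (rev xs) = rev xs" "takeWhile (\<lambda>y. x < y) ys = ys"
    using assms by simp_all
  show ?thesis unfolding andre_letter_def Let_def runs by simp
qed

lemma andre_word_append_min:
  assumes "\<forall>x\<in>set u \<union> set v. m < x"
  shows "andre_word (u @ m # v) \<longleftrightarrow> andre_word u \<and> andre_letter u m v \<and> andre_word v"
proof -
  let ?w = "u @ m # v"
  let ?A = "\<lambda>i. andre_letter (take i ?w) (?w ! i) (drop (Suc i) ?w)"
  have left: "?A i \<longleftrightarrow> andre_letter (take i u) (u ! i) (drop (Suc i) u)" if "i < length u" for i
    using that assms andre_letter_append_right[of m "u ! i"] by (simp add: nth_append)
  have right: "?A (Suc (length u + i)) \<longleftrightarrow> andre_letter (take i v) (v ! i) (drop (Suc i) v)"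
    if "i < length v" for i
    using that assms andre_letter_append_left[of m "v ! i"] by (simp add: nth_append)
  have "andre_word ?w \<longleftrightarrow> (\<forall>i<Suc (length u + length v). ?A i)"
    unfolding andre_word_def by simp
  also have "\<dots> \<longleftrightarrow> andre_word u \<and> andre_letter u m v \<and> andre_word v"
    unfolding all_less_Suc_add_iff andre_word_def using left right by simp
  finally show ?thesis .
qed

lemma andre_word_min_before_max:
  fixes u v :: "'a::linorder list"
  assumes "distinct (u @ m # v)" "m = Min (set (u @ m # v))" "Max (set (u @ m # v)) \<in> set v"
  shows "andre_word (u @ m # v) \<longleftrightarrow> andre_word u \<and> andre_word v"
proof -
  have greater: "\<forall>x\<in>set u \<union> set v. m < x"
  proof
    fix x assume x: "x \<in> set u \<union> set v"
    then have "m \<le> x"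
      using Min_le[OF finite_set, of x "u @ m # v"] unfolding assms(2)[symmetric] by simp
    moreover have "m \<noteq> x" using x assms(1) by auto
    ultimately show "m < x" by simp
  qed
  have "Max (set u) < Max (set v)" if "u \<noteq> []"
  proof -
    have "v \<noteq> []" using assms(3) by auto
    then have u: "Max (set u) \<in> set u" and v: "Max (set v) \<in> set v"
      using that by auto
    have "Max (set v) = Max (set (u @ m # v))"
      using assms(3) by (intro Max_eqI) auto
    moreover have "Max (set u) \<le> Max (set (u @ m # v))"
      using u by simp
    moreover have "Max (set u) \<noteq> Max (set v)"
      using u v assms(1) by auto
    ultimately show ?thesis by simp
  qed
  then show ?thesis
    using andre_word_append_min[OF greater] andre_letter_min[OF greater] assms(3) by auto
qed

lemma not_andre_word_max_before_min:
  fixes u v :: "'a::linorder list"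
  assumes "distinct (u @ M # v)" "M = Max (set (u @ M # v))" "Min (set (u @ M # v)) \<in> set v"
  shows "\<not> andre_word (u @ M # v)"
proof
  define m where "m = Min (set (u @ M # v))"
  assume andre: "andre_word (u @ M # v)"
  obtain v1 v2 where v: "v = v1 @ m # v2"
    using assms(3) unfolding m_def[symmetric] by (meson split_list)
  have greater: "\<forall>x\<in>set (u @ M # v1) \<union> set v2. m < x"
  proof
    fix x assume x: "x \<in> set (u @ M # v1) \<union> set v2"
    then have "x \<in> set (u @ M # v)" using v by auto
    then have "m \<le> x" unfolding m_def by simp
    moreover have "m \<noteq> x" using x assms(1) v by auto
    ultimately show "m < x" by simp
  qed
  have "andre_letter (u @ M # v1) m v2"
    using andre andre_word_append_min[OF greater] v by simp
  then have "v2 \<noteq> []" and lt: "Max (set (u @ M # v1)) < Max (set v2)"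
    using andre_letter_min[OF greater] by simp_all
  then have "Max (set v2) \<in> set (u @ M # v)" using v by auto
  then have "Max (set v2) \<le> M" by (metis Max_ge finite_set assms(2))
  moreover have "M \<le> Max (set (u @ M # v1))" by simp
  ultimately show False using lt by (metis leD order.strict_trans1)
qed

section \<open>The factorization in terms of runs\<close>

lemma w4_set_eq: "w4_set p i = set (takeWhile (\<lambda>x. p ! i < x) (drop (Suc i) p))"
proof -
  have "{p ! j | j. i < j \<and> j < length p \<and> (\<forall>k\<in>{i<..j}. p ! i < p ! k)} =
        {drop (Suc i) p ! j | j. j < length (drop (Suc i) p) \<and> (\<forall>k\<le>j. p ! i < drop (Suc i) p ! k)}"
    (is "?L = ?R")
  proof (intro set_eqI iffI)
    fix x assume "x \<in> ?L"
    then obtain j where "x = p ! j" "i < j" "j < length p" "\<forall>k\<in>{i<..j}. p ! i < p ! k" by blast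
    then show "x \<in> ?R" by (intro CollectI exI[of _ "j - Suc i"]) auto
  next
    fix x assume "x \<in> ?R"
    then obtain j where j: "x = p ! (Suc i + j)" "j < length p - Suc i"
      and larger: "\<forall>k\<le>j. p ! i < p ! (Suc i + k)"
      by auto
    have "\<forall>k\<in>{i<..Suc i + j}. p ! i < p ! k"
    proof
      fix k assume "k \<in> {i<..Suc i + j}"
      then have "k = Suc i + (k - Suc i)" "k - Suc i \<le> j" by auto
      then show "p ! i < p ! k" using larger by metis
    qed
    then show "x \<in> ?L" using j by force
  qed
  then show ?thesis unfolding w4_set_def set_takeWhile_conv_nth .
qed

lemma w2_set_eq:
  assumes "i < length p"
  shows "w2_set p i = set (takeWhile (\<lambda>x. p ! i < x) (rev (take i p)))"
proof -
  have rev_take_nth: "rev (take i p) ! j = p ! (i - Suc j)" if "j < i" for j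
    using that assms by (simp add: rev_nth)
  have "{p ! j | j. j < i \<and> (\<forall>k\<in>{j..<i}. p ! i < p ! k)} =
        {rev (take i p) ! j | j. j < i \<and> (\<forall>k\<le>j. p ! i < rev (take i p) ! k)}"
    (is "?L = ?R")
  proof (intro set_eqI iffI)
    fix x assume "x \<in> ?L"
    then obtain j where j: "x = p ! j" "j < i" "\<forall>k\<in>{j..<i}. p ! i < p ! k" by blast
    have "\<forall>k\<le>i - Suc j. p ! i < rev (take i p) ! k"
      using j(2,3) by (auto simp: rev_take_nth)
    then show "x \<in> ?R"
      using j(1,2) by (intro CollectI exI[of _ "i - Suc j"]) (auto simp: rev_take_nth)
  next
    fix x assume "x \<in> ?R"
    then obtain j where j: "x = p ! (i - Suc j)" "j < i"
      and larger: "\<forall>k\<le>j. p ! i < rev (take i p) ! k"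
      by (auto simp: rev_take_nth)
    have "\<forall>k\<in>{i - Suc j..<i}. p ! i < p ! k"
    proof
      fix k assume "k \<in> {i - Suc j..<i}"
      then have "k = i - Suc (i - Suc k)" "i - Suc k \<le> j" by auto
      then show "p ! i < p ! k" using j(2) larger rev_take_nth by (metis le_less_trans)
    qed
    then show "x \<in> ?L" using j by force
  qed
  then show ?thesis
    unfolding w2_set_def set_takeWhile_conv_nth using assms by simp
qed

lemma andre_letter_nth_iff:
  fixes p :: "int list"
  assumes "i < length p"
  shows "andre_letter (take i p) (p ! i) (drop (Suc i) p) \<longleftrightarrow>
    (0 < i \<and> p ! i < p ! (i - 1) \<longrightarrow>
      Suc i < length p \<and> p ! i < p ! Suc i \<and> Max (w2_set p i) < Max (w4_set p i))"
proof -
  have "last (take i p) = p ! (i - 1)" if "0 < i"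
    using that assms take_Suc_conv_app_nth[of "i - 1" p] by simp
  then have w2: "takeWhile (\<lambda>y. p ! i < y) (rev (take i p)) \<noteq> [] \<longleftrightarrow> 0 < i \<and> p ! i < p ! (i - 1)"
    using assms by (auto simp: takeWhile_eq_Nil_iff hd_rev)
  have w4: "takeWhile (\<lambda>y. p ! i < y) (drop (Suc i) p) \<noteq> [] \<longleftrightarrow>
      Suc i < length p \<and> p ! i < p ! Suc i"
    by (auto simp: takeWhile_eq_Nil_iff hd_drop_conv_nth)
  show ?thesis
    unfolding andre_letter_def Let_def w2 w4 w2_set_eq[OF assms] w4_set_eq by blast
qed

lemma andre_word_iff_descents:
  fixes p :: "int list"
  shows "andre_word p \<longleftrightarrow> (\<forall>i<length p. 0 < i \<and> p ! i < p ! (i - 1) \<longrightarrow>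
    Suc i < length p \<and> p ! i < p ! Suc i \<and> Max (w2_set p i) < Max (w4_set p i))"
  unfolding andre_word_def using andre_letter_nth_iff by blast

lemma andre_B_iff_descents:
  assumes "n \<ge> 1" "length \<pi> = n" "distinct (0 # \<pi>)"
  defines "p \<equiv> 0 # \<pi>"
  shows "andre_B n \<pi> \<longleftrightarrow> (\<forall>i\<le>n. 0 < i \<and> p ! i < p ! (i - 1) \<longrightarrow>
    i < n \<and> p ! i < p ! Suc i \<and> Max (w2_set p i) < Max (w4_set p i))"
    (is "_ \<longleftrightarrow> ?descents")
proof
  have neq: "p ! i \<noteq> p ! j" if "i \<le> n" "j \<le> n" "i \<noteq> j" for i j
    using that assms(2,3) unfolding p_def by (simp add: nth_eq_iff_index_eq)
  show ?descents if andre: "andre_B n \<pi>"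
  proof (intro allI impI)
    have last_ascent: "p ! (n - 1) < p ! n"
      using andre unfolding andre_B_def Let_def p_def[symmetric] by blast
    from andre have no_double_descent: "\<not> (p ! i < p ! (i - 1) \<and> p ! Suc i < p ! i)"
      and valley: "p ! i < p ! (i - 1) \<and> p ! i < p ! Suc i \<Longrightarrow> Max (w2_set p i) < Max (w4_set p i)"
      if "i \<in> {1..n - 1}" for i
      using that unfolding andre_B_def Let_def p_def[symmetric] by auto
    fix i assume i: "i \<le> n" and descent: "0 < i \<and> p ! i < p ! (i - 1)"
    have "i \<noteq> n" using last_ascent descent by auto
    then have inner: "i \<in> {1..n - 1}" using i descent by auto
    moreover have "p ! i < p ! Suc i"
      using no_double_descent[OF inner] descent neq[of i "Suc i"] \<open>i \<noteq> n\<close> i by fastforce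
    ultimately show "i < n \<and> p ! i < p ! Suc i \<and> Max (w2_set p i) < Max (w4_set p i)"
      using valley descent by auto
  qed
  show "andre_B n \<pi>" if descents: ?descents
  proof -
    have "p ! (n - 1) < p ! n"
    proof (rule ccontr)
      assume "\<not> p ! (n - 1) < p ! n"
      then have "p ! n < p ! (n - 1)" using neq[of "n - 1" n] assms(1) by fastforce
      then show False using descents assms(1) by auto
    qed
    then show ?thesis
      unfolding andre_B_def Let_def p_def[symmetric] using descents
      by (auto; metis Suc_le_eq diff_le_self le_trans less_asym)
  qed
qed

lemma andre_B_iff_andre_word:
  assumes "n \<ge> 1" "length \<pi> = n" "distinct (0 # \<pi>)"
  shows "andre_B n \<pi> \<longleftrightarrow> andre_word (0 # \<pi>)"
  unfolding andre_B_iff_descents[OF assms] andre_word_iff_descents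
  using assms(2) by (simp add: less_Suc_eq_le Suc_le_eq)

section \<open>HR-trees\<close>

lemma HR_tree_Leaf [simp]: "HR_tree Leaf"
  by (simp add: HR_tree_def min_max_tree_def)

lemma HR_tree_Node:
  "HR_tree (Node l a r) \<longleftrightarrow> HR_tree l \<and> HR_tree r \<and> distinct (inorder l @ a # inorder r) \<and>
    (a = Min (set_tree (Node l a r)) \<or> a = Max (set_tree (Node l a r))) \<and>
    (is_inner (Node l a r) \<longrightarrow> r \<noteq> Leaf \<and>
      (is_min_node (Node l a r) \<longrightarrow> Max (set_tree (Node l a r)) \<in> set_tree r) \<and>
      (is_max_node (Node l a r) \<longrightarrow> Min (set_tree (Node l a r)) \<in> set_tree r))"
proof -
  have "(\<forall>l' a' r'. Node l' a' r' \<in> subtrees (Node l a r) \<longrightarrow> P l' a' r') \<longleftrightarrow>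
    P l a r \<and> (\<forall>l' a' r'. Node l' a' r' \<in> subtrees l \<longrightarrow> P l' a' r') \<and>
    (\<forall>l' a' r'. Node l' a' r' \<in> subtrees r \<longrightarrow> P l' a' r')" for P
    by auto
  moreover have "(\<forall>l' a' r'. Node l' a' r' \<in> subtrees (Node l a r) \<and> Q l' a' r' \<longrightarrow> P l' a' r') \<longleftrightarrow>
    (Q l a r \<longrightarrow> P l a r) \<and>
    (\<forall>l' a' r'. Node l' a' r' \<in> subtrees l \<and> Q l' a' r' \<longrightarrow> P l' a' r') \<and>
    (\<forall>l' a' r'. Node l' a' r' \<in> subtrees r \<and> Q l' a' r' \<longrightarrow> P l' a' r')" for P Q
    by auto
  moreover have "distinct (inorder (Node l a r)) \<longleftrightarrow>
    distinct (inorder l) \<and> distinct (inorder r) \<and> distinct (inorder l @ a # inorder r)"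
    by auto
  ultimately show ?thesis
    unfolding HR_tree_def min_max_tree_def by (simp only:) blast
qed

lemma HR_tree_Node_iff:
  "HR_tree (Node l a r) \<longleftrightarrow> HR_tree l \<and> HR_tree r \<and> distinct (inorder l @ a # inorder r) \<and>
    (l = Leaf \<and> r = Leaf \<or>
     a = Min (set_tree (Node l a r)) \<and> Max (set_tree (Node l a r)) \<in> set_tree r \<or>
     a = Max (set_tree (Node l a r)) \<and> Min (set_tree (Node l a r)) \<in> set_tree r)"
proof (cases "is_inner (Node l a r)")
  case False
  then show ?thesis unfolding HR_tree_Node by (simp add: is_inner_def)
next
  case True
  then show ?thesis
    unfolding HR_tree_Node is_min_node_def is_max_node_def by (auto simp: is_inner_def)
qed

lemma HR_tree_inorder_inj:
  "HR_tree T1 \<Longrightarrow> HR_tree T2 \<Longrightarrow> inorder T1 = inorder T2 \<Longrightarrow> T1 = T2"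
proof (induction T1 arbitrary: T2)
  case (Node l1 a1 r1)
  then obtain l2 a2 r2 where T2: "T2 = Node l2 a2 r2" by (cases T2) auto
  note HR1 = Node.prems(1)[unfolded HR_tree_Node_iff]
  note HR2 = Node.prems(2)[unfolded T2 HR_tree_Node_iff]
  have w: "inorder l1 @ a1 # inorder r1 = inorder l2 @ a2 # inorder r2"
    using Node.prems(3) T2 by simp
  have S: "set_tree (Node l1 a1 r1) = set_tree (Node l2 a2 r2)"
    by (metis Node.prems(3) T2 set_inorder)
  have "a1 = a2"
  proof (rule ccontr)
    assume "a1 \<noteq> a2"
    then have "\<not> (l1 = Leaf \<and> r1 = Leaf)" "\<not> (l2 = Leaf \<and> r2 = Leaf)"
      using w by (auto simp: Cons_eq_append_conv append_eq_Cons_conv)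
    then have "a2 \<in> set (inorder r1)" "a1 \<in> set (inorder r2)"
      using HR1 HR2 S \<open>a1 \<noteq> a2\<close> by (metis set_inorder)+
    then show False using distinct_precedes_asym HR1 w by metis
  qed
  then have "inorder l1 = inorder l2 \<and> inorder r1 = inorder r2"
    using distinct_split_unique HR1 w by metis
  then show ?case using Node.IH HR1 HR2 T2 \<open>a1 = a2\<close> by auto
qed simp

lemma HR_tree_exists: "distinct w \<Longrightarrow> \<exists>T. HR_tree T \<and> inorder T = w"
proof (induction w rule: length_induct)
  case (1 w)
  show ?case
  proof (cases "length w \<le> 1")
    case True
    then consider "w = []" | x where "w = [x]"
      by (cases w) auto
    then show ?thesis
    proof cases
      case 2
      then show ?thesis
        by (intro exI[of _ "Node Leaf x Leaf"]) (simp add: HR_tree_Node_iff)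
    qed simp
  next
    case False
    let ?m = "Min (set w)" and ?M = "Max (set w)"
    obtain x y z where xyz: "w = x # y # z" using False by (cases w; cases "tl w") auto
    have "?m \<noteq> ?M"
    proof
      assume "?m = ?M"
      then have "x = y" using xyz by (metis Max_ge Min_le antisym finite_set list.set_intros)
      then show False using 1(2) xyz by simp
    qed
    then obtain u a v where uav: "w = u @ a # v"
      and extreme: "a = ?m \<and> ?M \<in> set v \<or> a = ?M \<and> ?m \<in> set v"
      using split_list_either_order[of ?m w ?M] xyz
      by (metis Max_in Min_in finite_set list.distinct(1) set_empty)
    have "\<exists>T. HR_tree T \<and> inorder T = u" "\<exists>T. HR_tree T \<and> inorder T = v"
      using 1 uav by auto
    then obtain Tu Tv where T: "HR_tree Tu" "inorder Tu = u" "HR_tree Tv" "inorder Tv = v"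
      by blast
    have "set_tree (Node Tu a Tv) = set w" using T uav by (simp flip: set_inorder)
    then have "HR_tree (Node Tu a Tv)"
      unfolding HR_tree_Node_iff using T uav extreme 1(2) by (simp flip: set_inorder)
    then show ?thesis using T uav by (intro exI[of _ "Node Tu a Tv"]) simp
  qed
qed

lemma HR_tree_min_nodes_iff_andre_word:
  "HR_tree T \<Longrightarrow> (\<forall>t\<in>subtrees T. is_inner t \<longrightarrow> is_min_node t) \<longleftrightarrow> andre_word (inorder T)"
proof (induction T)
  case Leaf
  then show ?case by (simp add: is_inner_def andre_word_def)
next
  case (Node l a r)
  let ?S = "set_tree (Node l a r)"
  note HR = Node.prems[unfolded HR_tree_Node_iff]
  have IH: "(\<forall>t\<in>subtrees l. is_inner t \<longrightarrow> is_min_node t) \<longleftrightarrow> andre_word (inorder l)"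
    "(\<forall>t\<in>subtrees r. is_inner t \<longrightarrow> is_min_node t) \<longleftrightarrow> andre_word (inorder r)"
    using Node.IH HR by blast+
  from HR consider "l = Leaf" "r = Leaf" | "a = Min ?S" "Max ?S \<in> set_tree r"
    | "a = Max ?S" "Min ?S \<in> set_tree r" by blast
  then show ?case
  proof cases
    case 1
    then show ?thesis by (simp add: is_inner_def andre_word_def andre_letter_def)
  next
    case 2
    then have "is_min_node (Node l a r)" by (auto simp: is_min_node_def is_inner_def)
    then show ?thesis
      using andre_word_min_before_max[of "inorder l" a "inorder r"] HR 2 IH by auto
  next
    case 3
    then have "\<not> is_min_node (Node l a r)" "is_inner (Node l a r)"
      using HR by (auto simp: is_min_node_def is_inner_def)
    then show ?thesis
      using not_andre_word_max_before_min[of "inorder l" a "inorder r"] HR 3 by auto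
  qed
qed

section \<open>Signed permutations\<close>

lemma signed_perms_distinct_inj_abs:
  assumes "\<pi> \<in> signed_perms n"
  shows "distinct (0 # \<pi>)" "inj_on abs (set \<pi>)"
proof -
  have len: "length \<pi> = n" and abs: "abs ` set \<pi> = int ` {1..n}"
    using assms by (auto simp: signed_perms_def)
  have eq: "card (abs ` set \<pi>) = length \<pi>" using len abs by (simp add: card_image)
  have "card (abs ` set \<pi>) \<le> card (set \<pi>)" by (rule card_image_le) simp
  moreover have "card (set \<pi>) \<le> length \<pi>" by (rule card_length)
  ultimately have "card (abs ` set \<pi>) = card (set \<pi>)" "card (set \<pi>) = length \<pi>"
    using eq by linarith+
  moreover have "0 \<notin> set \<pi>" using abs by force
  ultimately show "distinct (0 # \<pi>)" "inj_on abs (set \<pi>)"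
    by (simp_all add: card_distinct eq_card_imp_inj_on)
qed

lemma signed_perms_signs:
  assumes "\<pi> \<in> signed_perms n"
  obtains s :: "nat \<Rightarrow> int"
  where "\<forall>i\<in>{1..n}. s i = int i \<or> s i = - int i" "set \<pi> = s ` {1..n}"
proof
  let ?s = "\<lambda>i::nat. if int i \<in> set \<pi> then int i else - int i"
  have abs: "abs ` set \<pi> = int ` {1..n}" using assms by (simp add: signed_perms_def)
  note inj = signed_perms_distinct_inj_abs(2)[OF assms]
  show "\<forall>i\<in>{1..n}. ?s i = int i \<or> ?s i = - int i" by simp
  show "set \<pi> = ?s ` {1..n}"
  proof (intro equalityI subsetI)
    fix x assume x: "x \<in> set \<pi>"
    then obtain i where i: "i \<in> {1..n}" "\<bar>x\<bar> = int i" using abs by (metis image_eqI imageE)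
    have "?s i = x"
    proof (cases "x = int i")
      case False
      then have "x = - int i" using i(2) by auto
      moreover have "int i \<notin> set \<pi>"
        using inj x i \<open>x = - int i\<close> by (auto dest: inj_onD[of abs _ x "int i"])
      ultimately show ?thesis by simp
    qed (use x in simp)
    then show "x \<in> ?s ` {1..n}" using i(1) by blast
  next
    fix y assume "y \<in> ?s ` {1..n}"
    then obtain i where i: "i \<in> {1..n}" "y = ?s i" by blast
    then obtain x where "x \<in> set \<pi>" "\<bar>x\<bar> = int i" using abs by (metis imageE image_eqI)
    then have "x \<in> set \<pi>" "x = int i \<or> x = - int i" by auto
    then show "y \<in> set \<pi>" using i by auto
  qed
qed

lemma T_of_signed_perm:
  assumes "\<pi> \<in> signed_perms n"
  shows "HR_tree (T_of n \<pi>)" "inorder (T_of n \<pi>) = 0 # \<pi>"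
proof -
  obtain T where T: "HR_tree T" "inorder T = 0 # \<pi>"
    using HR_tree_exists signed_perms_distinct_inj_abs(1)[OF assms] by blast
  obtain s :: "nat \<Rightarrow> int"
    where "\<forall>i\<in>{1..n}. s i = int i \<or> s i = - int i" "set \<pi> = s ` {1..n}"
    using signed_perms_signs[OF assms] by blast
  moreover have "set_tree T = insert 0 (set \<pi>)" using T(2) by (simp flip: set_inorder)
  ultimately have "T \<in> BHR n" using T unfolding BHR_def by auto
  have "T_of n \<pi> = T"
    unfolding T_of_def
  proof (rule the_equality)
    show "\<And>T'. T' \<in> BHR n \<and> inorder T' = 0 # \<pi> \<Longrightarrow> T' = T"
      using T HR_tree_inorder_inj unfolding BHR_def by auto
  qed (use T \<open>T \<in> BHR n\<close> in simp)
  then show "HR_tree (T_of n \<pi>)" "inorder (T_of n \<pi>) = 0 # \<pi>" using T by simp_all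
qed

theorem mainTheorem8:
  fixes n :: nat and \<pi> :: "int list"
  assumes "n \<ge> 1" and "\<pi> \<in> signed_perms n"
  shows "andre_B n \<pi> \<longleftrightarrow>
    (\<forall>t \<in> subtrees (T_of n \<pi>). is_inner t \<longrightarrow> is_min_node t)"
proof -
  have "length \<pi> = n" using assms(2) by (simp add: signed_perms_def)
  then have "andre_B n \<pi> \<longleftrightarrow> andre_word (0 # \<pi>)"
    using andre_B_iff_andre_word assms signed_perms_distinct_inj_abs(1) by blast
  also have "\<dots> \<longleftrightarrow> (\<forall>t \<in> subtrees (T_of n \<pi>). is_inner t \<longrightarrow> is_min_node t)"
    using HR_tree_min_nodes_iff_andre_word T_of_signed_perm[OF assms(2)] by metis
  finally show ?thesis .
qed

end
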